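(* Let $K$ be an oriented virtual knot diagram. Let $m(K)$ be the diagram obtained from $K$ by switching all real crossings, and let $r(K)$ be $K$ with its orientation reversed. Then $$F_{m(K)}(t,s)=-F_K(t^{-1},s^{-1})\quad\text{and}\quad F_{r(K)}(t,s)=F_K(t^{-1},s).$$ Here $F_K(t^{-1},s^{-1})$ denotes the element obtained from $F_K(t,s)$ by replacing each basis element $t^{[p(s)]}$ by $t^{[-p(s^{-1})]}$. Likewise $F_K(t^{-1},s)$ is obtained by replacing $t^{[p(s)]}$ by $t^{[-p(s)]}$.
   Context: The Gauss diagram $G(K)$ of an oriented virtual knot diagram $K$ is built as follows. Take a counterclockwise-oriented circle. For each real crossing, join its two preimages by a chord directed from over- to undercrossing, labeled with the writhe $w(c)=\pm1$. Put $w(K)=\sum_c w(c)$. Let $d$ be a chord intersecting a chord $c$ (endpoints interleave). We say $d$ crosses $c$ from left to right if, viewing $c$ along its direction, the tail of $d$ lies on the left and its head on the right; right to left is the opposite. Let $r_1,\dots,r_n$ be the chords crossing $c$ from left to right and $l_1,\dots,l_m$ those crossing from right to left. Then $\mathrm{Ind}(c)=\sum_i w(r_i)-\sum_j w(l_j)$. Put $N=|\mathrm{Ind}(c)|$ and let $\phi$ be reduction mod $N$ into $\{0,\dots,N-1\}$ if $N\ge1$, and the identity if $N=0$. Define $$g_c(s)=\sum_i w(r_i)s^{\phi(\mathrm{Ind}(r_i))}-\sum_j w(l_j)s^{\phi(-\mathrm{Ind}(l_j))}.$$ Call Laurent polynomials $p,q\in\mathbb{Z}[s,s^{-1}]$ equivalent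 if $p(1)=q(1)$ and $p\equiv q\pmod{s^{|p(1)|}-1}$. Write $t^{[p]}$ for the corresponding basis element of the free abelian group on equivalence classes. Then $$F_K(t,s)=\sum_c w(c)\,t^{[g_c(s)]}-w(K)\,t^{[0]},$$ summing over all real crossings. *)

theory Defs
  imports Main "HOL-Library.Poly_Mapping"
begin

text \<open>A Gauss diagram is a finite set of chords (t, h, e): t is the tail
 (preimage of the overcrossing), h the head (preimage of the undercrossing),
 e = w(c) the writhe.  Endpoints are integers; the (counterclockwise)
 orientation of the circle is the cyclic order of the integers.\<close>

type_synonym chord = "int \<times> int \<times> int"

definition ctail :: "chord \<Rightarrow> int" where "ctail c = fst c"
definition chead :: "chord \<Rightarrow> int" where "chead c = fst (snd c)"
definition cw :: "chord \<Rightarrow> int" where "cw c = snd (snd c)"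

definition gauss_wf :: "chord set \<Rightarrow> bool" where
  "gauss_wf G \<longleftrightarrow> finite G \<and>
     (\<forall>c\<in>G. ctail c \<noteq> chead c \<and> cw c \<in> {1, -1}) \<and>
     (\<forall>c\<in>G. \<forall>d\<in>G. c \<noteq> d \<longrightarrow> {ctail c, chead c} \<inter> {ctail d, chead d} = {})"

definition ccw_between :: "int \<Rightarrow> int \<Rightarrow> int \<Rightarrow> bool" where
  "ccw_between a p b \<longleftrightarrow> (if a < b then a < p \<and> p < b else (a < p \<or> p < b))"

text \<open>Viewing c along its direction (tail to head) on a counterclockwise circle,
 the right side is the ccw arc from tail to head, the left side the ccw arc
 from head to tail.\<close>
definition right_of :: "chord \<Rightarrow> int \<Rightarrow> bool" where
  "right_of c p \<longleftrightarrow> ccw_between (ctail c) p (chead c)"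
definition left_of :: "chord \<Rightarrow> int \<Rightarrow> bool" where
  "left_of c p \<longleftrightarrow> ccw_between (chead c) p (ctail c)"

definition crosses_lr :: "chord \<Rightarrow> chord \<Rightarrow> bool" where
  "crosses_lr d c \<longleftrightarrow> left_of c (ctail d) \<and> right_of c (chead d)"
definition crosses_rl :: "chord \<Rightarrow> chord \<Rightarrow> bool" where
  "crosses_rl d c \<longleftrightarrow> right_of c (ctail d) \<and> left_of c (chead d)"

definition writhe :: "chord set \<Rightarrow> int" where
  "writhe G = (\<Sum>c\<in>G. cw c)"

definition Ind :: "chord set \<Rightarrow> chord \<Rightarrow> int" where
  "Ind G c = (\<Sum>d\<in>{d\<in>G. crosses_lr d c}. cw d) - (\<Sum>d\<in>{d\<in>G. crosses_rl d c}. cw d)"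

section \<open>Laurent polynomials Z[s,s^-1] as the group ring Z[Z]\<close>

type_synonym lpoly = "int \<Rightarrow>\<^sub>0 int"

definition lmon :: "int \<Rightarrow> int \<Rightarrow> lpoly" where "lmon k a = Poly_Mapping.single k a"

definition leval1 :: "lpoly \<Rightarrow> int" where
  "leval1 p = (\<Sum>k\<in>Poly_Mapping.keys p. Poly_Mapping.lookup p k)"

definition linv :: "lpoly \<Rightarrow> lpoly" where
  "linv p = (\<Sum>k\<in>Poly_Mapping.keys p. lmon (-k) (Poly_Mapping.lookup p k))"

definition lequiv :: "lpoly \<Rightarrow> lpoly \<Rightarrow> bool" where
  "lequiv p q \<longleftrightarrow> leval1 p = leval1 q \<and> (lmon \<bar>leval1 p\<bar> 1 - 1) dvd (p - q)"

definition lclass :: "lpoly \<Rightarrow> lpoly set" where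
  "lclass p = {q. lequiv p q}"

definition phi :: "int \<Rightarrow> int \<Rightarrow> int" where
  "phi N k = (if N \<ge> 1 then k mod N else k)"

definition gpoly :: "chord set \<Rightarrow> chord \<Rightarrow> lpoly" where
  "gpoly G c = (let N = \<bar>Ind G c\<bar> in
     (\<Sum>d\<in>{d\<in>G. crosses_lr d c}. lmon (phi N (Ind G d)) (cw d))
   - (\<Sum>d\<in>{d\<in>G. crosses_rl d c}. lmon (phi N (- Ind G d)) (cw d)))"

text \<open>Elements of the free abelian group on equivalence classes: finitely
 supported integer functions on classes; t^[p] is single (lclass p) 1.\<close>
definition Finv :: "chord set \<Rightarrow> (lpoly set \<Rightarrow>\<^sub>0 int)" where
  "Finv G = (\<Sum>c\<in>G. Poly_Mapping.single (lclass (gpoly G c)) (cw c))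
            - Poly_Mapping.single (lclass 0) (writhe G)"

text \<open>Linear substitution replacing each basis element t^[p] by t^[f p]
 (p any representative of the class).\<close>
definition tsubst :: "(lpoly \<Rightarrow> lpoly) \<Rightarrow> (lpoly set \<Rightarrow>\<^sub>0 int) \<Rightarrow> (lpoly set \<Rightarrow>\<^sub>0 int)" where
  "tsubst f x = (\<Sum>X\<in>Poly_Mapping.keys x. Poly_Mapping.single (lclass (f (SOME p. p \<in> X))) (Poly_Mapping.lookup x X))"

text \<open>Switching all real crossings: every chord reverses direction and its sign flips.\<close>
definition mirror :: "chord set \<Rightarrow> chord set" where
  "mirror G = (\<lambda>(t, h, e). (h, t, - e)) ` G"

text \<open>Reversing the orientation: the circle is traversed backwards (reflection
 of the endpoints); over/under information and crossing signs are unchanged.\<close>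
definition reverse :: "chord set \<Rightarrow> chord set" where
  "reverse G = (\<lambda>(t, h, e). (- t, - h, e)) ` G"

end

theory Submission
  imports Defs
begin

text \<open>Mirroring reverses every chord and negates its sign; this preserves the
  left/right type of every crossing pair, so each index \<open>Ind(c)\<close> changes sign
  and \<open>g_c\<close> becomes \<open>-g_c(s\<^sup>-\<^sup>1)\<close>, except that the exponents \<open>\<phi>(-x)\<close> appear
  where \<open>-\<phi>(x)\<close> is wanted. These agree modulo \<open>N = |Ind(c)|\<close>, so the two
  polynomials differ by a multiple of \<open>s\<^sup>N - 1\<close> and define the same basis element.
  Reversal reflects the circle, which swaps left and right: again every index
  changes sign, the two sums of \<open>g_c\<close> trade places, and \<open>g_c\<close> becomes exactly
  \<open>-g_c\<close>. Finally \<open>p \<mapsto> -p\<close> and \<open>p \<mapsto> -p(s\<^sup>-\<^sup>1)\<close> respect the equivalence of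
  Laurent polynomials, so both substitutions act on \<open>F\<close> term by term.

  Laurent polynomials are the free abelian group on \<open>\<int>\<close>, so \<open>linv\<close>, \<open>leval1\<close>
  and \<open>tsubst\<close> are all linear extensions (\<open>frag_extend\<close>) of maps on generators.\<close>

lemma frag_cmul_frag_of: "frag_cmul a (frag_of k) = Poly_Mapping.single k a"
  by (rule poly_mapping_eqI) (simp add: lookup_single when_def)

lemma frag_cmul_diff: "frag_cmul e (x - y) = frag_cmul e x - frag_cmul e y"
  by (rule poly_mapping_eqI) (simp add: lookup_minus right_diff_distrib)

lemma frag_cmul_single: "frag_cmul e (Poly_Mapping.single k a) = Poly_Mapping.single k (e * a)"
  by (rule poly_mapping_eqI) (simp add: lookup_single when_def)

lemma linv_eq_frag_extend: "linv p = frag_extend (frag_of \<circ> uminus) p"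
  by (simp add: linv_def frag_extend_def frag_cmul_frag_of lmon_def)

lemma leval1_eq_frag_extend: "leval1 p = Poly_Mapping.lookup (frag_extend (\<lambda>_. frag_of ()) p) ()"
  by (simp add: leval1_def frag_extend_def lookup_sum)

lemma tsubst_eq_frag_extend:
  "tsubst f x = frag_extend (\<lambda>X. frag_of (lclass (f (SOME p. p \<in> X)))) x"
  by (simp add: tsubst_def frag_extend_def frag_cmul_frag_of)

lemma lmon_eq_frag_cmul: "lmon k a = frag_cmul a (frag_of k)"
  by (simp add: lmon_def frag_cmul_frag_of)

lemma linv_lmon [simp]: "linv (lmon k a) = lmon (- k) a"
  unfolding lmon_eq_frag_cmul linv_eq_frag_extend frag_extend_cmul by simp

lemma linv_diff: "linv (p - q) = linv p - linv q"
  by (simp add: linv_eq_frag_extend frag_extend_diff)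

lemma linv_sum: "linv (\<Sum>i\<in>A. f i) = (\<Sum>i\<in>A. linv (f i))"
  by (cases "finite A") (simp_all add: linv_eq_frag_extend frag_extend_sum)

lemma linv_mult: "linv (p * q) = linv p * linv q"
proof -
  have monomial: "linv (frag_of k * q) = linv (frag_of k) * linv q" for k
    using subset_UNIV
  proof (induction q rule: frag_induction)
    case zero
    show ?case by (simp add: linv_eq_frag_extend)
  next
    case (one l)
    show ?case by (simp add: mult_single linv_eq_frag_extend)
  next
    case (diff a b)
    then show ?case by (simp add: right_diff_distrib linv_diff)
  qed
  show ?thesis
    using subset_UNIV
  proof (induction p rule: frag_induction)
    case zero
    show ?case by (simp add: linv_eq_frag_extend)
  next
    case (one k)
    show ?case by (rule monomial)
  next
    case (diff a b)
    then show ?case by (simp add: left_diff_distrib linv_diff)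
  qed
qed

lemma leval1_diff: "leval1 (p - q) = leval1 p - leval1 q"
  by (simp add: leval1_eq_frag_extend frag_extend_diff lookup_minus)

lemma leval1_uminus: "leval1 (- p) = - leval1 p"
  by (simp add: leval1_eq_frag_extend frag_extend_minus)

lemma leval1_sum: "leval1 (\<Sum>i\<in>A. f i) = (\<Sum>i\<in>A. leval1 (f i))"
  by (cases "finite A") (simp_all add: leval1_eq_frag_extend frag_extend_sum lookup_sum)

lemma leval1_lmon [simp]: "leval1 (lmon k a) = a"
  unfolding lmon_eq_frag_cmul leval1_eq_frag_extend frag_extend_cmul by simp

lemma leval1_linv [simp]: "leval1 (linv p) = leval1 p"
  unfolding leval1_eq_frag_extend linv_eq_frag_extend frag_extend_compose
  by (simp add: comp_def)

lemma lmon_mult [simp]: "lmon k a * lmon l b = lmon (k + l) (a * b)"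
  by (simp add: lmon_def mult_single)

lemma lmon_zero_one: "lmon 0 1 = 1"
  by (simp add: lmon_def)

lemma lmon_power: "lmon N 1 ^ n = lmon (int n * N) 1"
  by (induction n) (simp_all add: lmon_zero_one algebra_simps)

lemma lmon_minus_one_dvd: "(lmon N 1 - 1) dvd (lmon (k * N) 1 - 1)"
proof (cases "k \<ge> 0")
  case True
  then obtain n where "k = int n"
    using nonneg_int_cases by blast
  then show ?thesis
    by (simp add: power_diff_1_eq flip: lmon_power)
next
  case False
  then obtain n where k: "k = - int n"
    by (metis nonpos_int_cases linorder_linear)
  have "lmon (k * N) 1 - 1 = - lmon (k * N) 1 * (lmon N 1 ^ n - 1)"
    by (simp add: k lmon_power algebra_simps flip: lmon_zero_one)
  then show ?thesis
    by (simp add: power_diff_1_eq)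
qed

lemma lmon_diff_dvd:
  assumes "N dvd (a - b)"
  shows "(lmon N 1 - 1) dvd (lmon a w - lmon b w)"
proof -
  obtain k where "a - b = k * N"
    using assms by (metis dvd_def mult.commute)
  then have "lmon a w - lmon b w = lmon b w * (lmon (k * N) 1 - 1)"
    by (simp add: algebra_simps flip: lmon_zero_one)
  then show ?thesis
    using lmon_minus_one_dvd by simp
qed

lemma sum_lmon_diff_dvd:
  assumes "\<And>d. d \<in> A \<Longrightarrow> N dvd (a d - b d)"
  shows "(lmon N 1 - 1) dvd ((\<Sum>d\<in>A. lmon (a d) (w d)) - (\<Sum>d\<in>A. lmon (b d) (w d)))"
  unfolding sum_subtractf[symmetric] by (rule dvd_sum) (rule lmon_diff_dvd[OF assms])

lemma lequiv_refl: "lequiv p p"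
  by (simp add: lequiv_def)

lemma lequiv_sym: "lequiv p q \<Longrightarrow> lequiv q p"
  unfolding lequiv_def by (metis dvd_minus_iff minus_diff_eq)

lemma lequiv_trans:
  assumes "lequiv p q" and "lequiv q r"
  shows "lequiv p r"
proof -
  have "p - r = (p - q) + (q - r)"
    by simp
  then show ?thesis
    using assms unfolding lequiv_def by (metis dvd_add)
qed

lemma lclass_eq: "lequiv p q \<Longrightarrow> lclass p = lclass q"
  unfolding lclass_def using lequiv_sym lequiv_trans by blast

lemma lequiv_uminus: "lequiv p q \<Longrightarrow> lequiv (- p) (- q)"
  unfolding lequiv_def leval1_uminus
  by (metis abs_minus dvd_minus_iff minus_diff_eq diff_minus_eq_add uminus_add_conv_diff)

lemma lequiv_linv:
  assumes "lequiv p q"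
  shows "lequiv (linv p) (linv q)"
proof -
  define n where "n = \<bar>leval1 p\<bar>"
  have "(lmon n 1 - 1) dvd (p - q)"
    using assms unfolding lequiv_def n_def by blast
  then obtain r where r: "p - q = (lmon n 1 - 1) * r"
    by (elim dvdE)
  have "linv p - linv q = linv (lmon n 1 - 1) * linv r"
    by (simp add: r linv_mult flip: linv_diff)
  also have "linv (lmon n 1 - 1) = lmon (- n) 1 - lmon 0 1"
    by (simp add: linv_diff flip: lmon_zero_one)
  finally have "linv p - linv q = (lmon (- n) 1 - lmon 0 1) * linv r" .
  moreover have "(lmon n 1 - 1) dvd (lmon (- n) 1 - lmon 0 1)"
    by (rule lmon_diff_dvd) simp
  ultimately show ?thesis
    using assms by (simp add: lequiv_def n_def)
qed

lemma tsubst_single_class: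
  "tsubst f (Poly_Mapping.single X a) = Poly_Mapping.single (lclass (f (SOME p. p \<in> X))) a"
  by (cases "a = 0") (simp_all add: tsubst_def)

lemma tsubst_single:
  assumes "\<And>p q. lequiv p q \<Longrightarrow> lequiv (f p) (f q)"
  shows "tsubst f (Poly_Mapping.single (lclass p) a) = Poly_Mapping.single (lclass (f p)) a"
proof -
  have "p \<in> lclass p"
    by (simp add: lclass_def lequiv_refl)
  then have "lequiv p (SOME q. q \<in> lclass p)"
    by (metis lclass_def mem_Collect_eq someI)
  then have "lclass (f (SOME q. q \<in> lclass p)) = lclass (f p)"
    by (metis assms lclass_eq)
  then show ?thesis
    by (simp add: tsubst_single_class)
qed

lemma tsubst_diff: "tsubst f (x - y) = tsubst f x - tsubst f y"
  by (simp add: tsubst_eq_frag_extend frag_extend_diff)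

lemma tsubst_sum: "tsubst f (\<Sum>i\<in>A. x i) = (\<Sum>i\<in>A. tsubst f (x i))"
  by (cases "finite A") (simp_all add: tsubst_eq_frag_extend frag_extend_sum)

definition mirror_chord :: "chord \<Rightarrow> chord" where
  "mirror_chord = (\<lambda>(t, h, e). (h, t, - e))"

definition reverse_chord :: "chord \<Rightarrow> chord" where
  "reverse_chord = (\<lambda>(t, h, e). (- t, - h, e))"

lemma mirror_eq_image: "mirror G = mirror_chord ` G"
  by (simp add: mirror_def mirror_chord_def)

lemma reverse_eq_image: "reverse G = reverse_chord ` G"
  by (simp add: reverse_def reverse_chord_def)

lemma mirror_chord_simps [simp]:
  "ctail (mirror_chord c) = chead c" "chead (mirror_chord c) = ctail c" "cw (mirror_chord c) = - cw c"
  by (cases c; simp add: mirror_chord_def ctail_def chead_def cw_def)+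

lemma reverse_chord_simps [simp]:
  "ctail (reverse_chord c) = - ctail c" "chead (reverse_chord c) = - chead c"
  "cw (reverse_chord c) = cw c"
  by (cases c; simp add: reverse_chord_def ctail_def chead_def cw_def)+

lemma inj_mirror_chord: "inj mirror_chord"
  by (auto simp: inj_def mirror_chord_def)

lemma inj_reverse_chord: "inj reverse_chord"
  by (auto simp: inj_def reverse_chord_def)

lemma ccw_between_uminus: "ccw_between (- a) (- p) (- b) = ccw_between b p a"
  by (auto simp: ccw_between_def)

lemma crosses_lr_mirror_chord [simp]:
  "crosses_lr (mirror_chord d) (mirror_chord c) = crosses_lr d c"
  by (auto simp: crosses_lr_def left_of_def right_of_def)

lemma crosses_rl_mirror_chord [simp]:
  "crosses_rl (mirror_chord d) (mirror_chord c) = crosses_rl d c"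
  by (auto simp: crosses_rl_def left_of_def right_of_def)

lemma crosses_lr_reverse_chord [simp]:
  "crosses_lr (reverse_chord d) (reverse_chord c) = crosses_rl d c"
  by (auto simp: crosses_rl_def crosses_lr_def left_of_def right_of_def ccw_between_uminus)

lemma crosses_rl_reverse_chord [simp]:
  "crosses_rl (reverse_chord d) (reverse_chord c) = crosses_lr d c"
  by (auto simp: crosses_rl_def crosses_lr_def left_of_def right_of_def ccw_between_uminus)

lemma sum_filter_image:
  assumes "inj g"
  shows "(\<Sum>d\<in>{d\<in>g ` G. P d}. f d) = (\<Sum>d\<in>{d\<in>G. P (g d)}. f (g d))"
proof -
  have "{d\<in>g ` G. P d} = g ` {d\<in>G. P (g d)}"
    by auto
  then show ?thesis
    using assms by (simp add: sum.reindex inj_on_def inj_def)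
qed

lemma Ind_mirror: "Ind (mirror G) (mirror_chord c) = - Ind G c"
  by (simp add: Ind_def mirror_eq_image sum_filter_image[OF inj_mirror_chord] sum_negf)

lemma Ind_reverse: "Ind (reverse G) (reverse_chord c) = - Ind G c"
  by (simp add: Ind_def reverse_eq_image sum_filter_image[OF inj_reverse_chord])

lemma leval1_gpoly: "leval1 (gpoly G c) = Ind G c"
  by (simp add: gpoly_def Let_def leval1_diff leval1_sum Ind_def)

lemma gpoly_reverse: "gpoly (reverse G) (reverse_chord c) = - gpoly G c"
  using Ind_reverse[unfolded reverse_eq_image, of G]
  by (simp add: gpoly_def Let_def reverse_eq_image sum_filter_image[OF inj_reverse_chord])

lemma phi_dvd: "N dvd (phi N k - k)"
  by (simp add: phi_def mod_eq_dvd_iff[symmetric] mod_diff_left_eq)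

lemma phi_uminus_dvd: "N dvd (phi N (- k) - - phi N k)"
proof -
  have "phi N (- k) - - phi N k = (phi N (- k) - - k) + (phi N k - k)"
    by simp
  then show ?thesis
    using phi_dvd by (metis dvd_add)
qed

lemma gpoly_mirror: "lequiv (gpoly (mirror G) (mirror_chord c)) (- linv (gpoly G c))"
proof -
  define N where "N = \<bar>Ind G c\<bar>"
  define A where "A = {d\<in>G. crosses_lr d c}"
  define B where "B = {d\<in>G. crosses_rl d c}"
  have mirrored: "gpoly (mirror G) (mirror_chord c) =
      (\<Sum>d\<in>A. lmon (phi N (- Ind G d)) (- cw d)) - (\<Sum>d\<in>B. lmon (phi N (Ind G d)) (- cw d))"
    using Ind_mirror[unfolded mirror_eq_image, of G]
    by (simp add: gpoly_def Let_def mirror_eq_image sum_filter_image[OF inj_mirror_chord] N_def A_def B_def)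
  have substituted: "- linv (gpoly G c) =
      (\<Sum>d\<in>A. lmon (- phi N (Ind G d)) (- cw d)) - (\<Sum>d\<in>B. lmon (- phi N (- Ind G d)) (- cw d))"
    by (simp add: gpoly_def Let_def linv_diff linv_sum N_def A_def B_def)
      (simp add: lmon_def single_uminus sum_negf)
  have "(lmon N 1 - 1) dvd (gpoly (mirror G) (mirror_chord c) - - linv (gpoly G c))"
  proof -
    have regroup: "(a - b) - (a' - b') = (a - a') - (b - b')" for a b a' b' :: lpoly
      by simp
    have "(lmon N 1 - 1) dvd ((\<Sum>d\<in>A. lmon (phi N (- Ind G d)) (- cw d))
        - (\<Sum>d\<in>A. lmon (- phi N (Ind G d)) (- cw d)))"
      by (rule sum_lmon_diff_dvd) (rule phi_uminus_dvd)
    moreover have "(lmon N 1 - 1) dvd ((\<Sum>d\<in>B. lmon (phi N (Ind G d)) (- cw d))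
        - (\<Sum>d\<in>B. lmon (- phi N (- Ind G d)) (- cw d)))"
      by (rule sum_lmon_diff_dvd) (metis phi_uminus_dvd minus_minus)
    ultimately show ?thesis
      unfolding mirrored substituted by (subst regroup) (rule dvd_diff)
  qed
  then show ?thesis
    by (simp add: lequiv_def leval1_gpoly leval1_uminus Ind_mirror N_def)
qed

lemma Finv_image:
  assumes "inj g"
    and weight: "\<And>c. cw (g c) = e * cw c"
    and gpoly_image: "\<And>c. c \<in> G \<Longrightarrow> lequiv (gpoly (g ` G) (g c)) (f (gpoly G c))"
    and respects: "\<And>p q. lequiv p q \<Longrightarrow> lequiv (f p) (f q)"
    and "f 0 = 0"
  shows "Finv (g ` G) = frag_cmul e (tsubst f (Finv G))"
proof -
  have inj: "inj_on g G"
    using \<open>inj g\<close> by (rule inj_on_subset) simp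
  have "Finv (g ` G) = (\<Sum>c\<in>G. Poly_Mapping.single (lclass (gpoly (g ` G) (g c))) (e * cw c))
      - Poly_Mapping.single (lclass 0) (e * writhe G)"
    by (simp add: Finv_def writhe_def sum.reindex[OF inj] weight sum_distrib_left)
  also have "\<dots> = (\<Sum>c\<in>G. Poly_Mapping.single (lclass (f (gpoly G c))) (e * cw c))
      - Poly_Mapping.single (lclass (f 0)) (e * writhe G)"
    using lclass_eq[OF gpoly_image] \<open>f 0 = 0\<close> by simp
  also have "\<dots> = frag_cmul e (tsubst f (Finv G))"
    by (simp add: Finv_def tsubst_diff tsubst_sum tsubst_single[OF respects]
        frag_cmul_diff frag_cmul_sum frag_cmul_single)
  finally show ?thesis .
qed

theorem proposition5p2:
  assumes "gauss_wf G"
  shows "Finv (mirror G) = - tsubst (\<lambda>p. - linv p) (Finv G)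
       \<and> Finv (reverse G) = tsubst (\<lambda>p. - p) (Finv G)"
proof
  have "Finv (mirror_chord ` G) = frag_cmul (- 1) (tsubst (\<lambda>p. - linv p) (Finv G))"
    using gpoly_mirror[unfolded mirror_eq_image]
    by (intro Finv_image inj_mirror_chord lequiv_uminus lequiv_linv)
      (simp_all add: linv_def)
  then show "Finv (mirror G) = - tsubst (\<lambda>p. - linv p) (Finv G)"
    by (simp add: mirror_eq_image)
  have "Finv (reverse_chord ` G) = frag_cmul 1 (tsubst uminus (Finv G))"
    using gpoly_reverse[unfolded reverse_eq_image]
    by (intro Finv_image inj_reverse_chord lequiv_uminus) (simp_all add: lequiv_refl)
  then show "Finv (reverse G) = tsubst (\<lambda>p. - p) (Finv G)"
    by (simp add: reverse_eq_image)
qed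

end
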